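(* Let $f,g:[0,\infty)\to[0,\infty)$, let $0<a<b<\infty$, and suppose $fg$ is Lebesgue integrable on $[a,b]$. Let $q>1$ and suppose $f^q$ and $g^{q/(q-1)}$ are both $(1,1)$-GA-convex on $[0,b]$. Then \[ \int_a^b f(x)g(x)\,dx\le\Bigl\{f^q(a)[L(a,b)-a]+[b-L(a,b)]f^q(b)\Bigr\}^{1/q}\Bigl\{g^{q/(q-1)}(a)[L(a,b)-a]+[b-L(a,b)]g^{q/(q-1)}(b)\Bigr\}^{1-1/q}. \]
   Context: For $c>0$, $h:[0,c]\to\mathbb{R}$ and $(\alpha,m)\in(0,1]^2$, $h$ is called $(\alpha,m)$-GA-convex on $[0,c]$ if $h\bigl(x^\lambda y^{m(1-\lambda)}\bigr)\le\lambda^\alpha h(x)+m(1-\lambda^\alpha)h(y)$ for all $x,y\in[0,c]$ and all $\lambda\in[0,1]$ (with the convention $0^0=1$). For $x,y>0$, $x\neq y$, the logarithmic mean is $L(x,y)=\frac{y-x}{\ln y-\ln x}$. *)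

theory Defs
  imports "HOL-Analysis.Analysis"
begin

text \<open>Real power with the convention 0^0 = 1 (Isabelle's powr has 0 powr 0 = 0).
  Only used for nonnegative bases.\<close>
definition gpow :: "real \<Rightarrow> real \<Rightarrow> real" where
  "gpow x t = (if t = 0 then 1 else x powr t)"

definition GA_convex :: "real \<Rightarrow> real \<Rightarrow> real \<Rightarrow> (real \<Rightarrow> real) \<Rightarrow> bool" where
  "GA_convex \<alpha> m c h \<longleftrightarrow>
     (\<forall>x\<in>{0..c}. \<forall>y\<in>{0..c}. \<forall>t\<in>{0..1}.
        h (gpow x t * gpow y (m * (1 - t))) \<le> gpow t \<alpha> * h x + m * (1 - gpow t \<alpha>) * h y)"

definition logmean :: "real \<Rightarrow> real \<Rightarrow> real" where
  "logmean x y = (y - x) / (ln y - ln x)"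

end

theory Submission
  imports Defs
begin

text \<open>
  Every x in [a, b] is x = a^t * b^(1-t) with t = (ln b - ln x) / (ln b - ln a), so a
  (1,1)-GA-convex h satisfies h(x) <= t h(a) + (1 - t) h(b), and the weight t integrates over
  [a, b] to L(a, b) - a. Hence f^q and g^(q/(q-1)) have explicit majorants whose integrals are
  the two braces of the claim, and Hoelder's inequality, in the form obtained by integrating a
  rescaled Young inequality against such majorants, finishes the proof.
\<close>

definition log_weight :: "real \<Rightarrow> real \<Rightarrow> real \<Rightarrow> real" where
  "log_weight a b x = (ln b - ln x) / (ln b - ln a)"

lemma log_weight_in_unit_interval:
  assumes "0 < a" "a < b" "x \<in> {a..b}"
  shows "log_weight a b x \<in> {0..1}"
  using assms by (auto simp: log_weight_def divide_simps)

lemma powr_log_weight: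
  assumes "0 < a" "a < b" "x \<in> {a..b}"
  shows "a powr log_weight a b x * b powr (1 - log_weight a b x) = x"
proof -
  define t where "t = log_weight a b x"
  have "t * (ln b - ln a) = ln b - ln x"
    using assms by (simp add: t_def log_weight_def)
  then have "t * ln a + (1 - t) * ln b = ln x"
    by (simp add: algebra_simps)
  moreover have "a powr t * b powr (1 - t) = exp (t * ln a + (1 - t) * ln b)"
    using assms by (simp add: powr_def exp_add)
  ultimately show ?thesis
    using assms by (simp add: t_def)
qed

lemma gpow_pos: "x > 0 \<Longrightarrow> gpow x t = x powr t"
  by (simp add: gpow_def)

lemma GA_convex_le_log_interpolation:
  assumes "GA_convex 1 1 b h" "0 < a" "a < b" "x \<in> {a..b}"
  shows "h x \<le> log_weight a b x * h a + (1 - log_weight a b x) * h b"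
proof -
  define t where "t = log_weight a b x"
  have t: "t \<in> {0..1}"
    using log_weight_in_unit_interval[OF assms(2-4)] by (simp add: t_def)
  have "h (gpow a t * gpow b (1 * (1 - t))) \<le> gpow t 1 * h a + 1 * (1 - gpow t 1) * h b"
    using assms t unfolding GA_convex_def by auto
  moreover have "gpow a t * gpow b (1 * (1 - t)) = x"
    using powr_log_weight[OF assms(2-4)] assms(2,3) by (simp add: gpow_pos t_def)
  ultimately show ?thesis
    using t by (simp add: gpow_def t_def)
qed

lemma has_integral_log_weight:
  assumes "0 < a" "a < b"
  shows "(log_weight a b has_integral (logmean a b - a)) {a..b}"
proof -
  define l where "l = ln b - ln a"
  have l: "l > 0"
    using assms by (simp add: l_def)
  define T where "T x = (x * ln b - x * ln x + x) / l" for x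
  have "(T has_vector_derivative log_weight a b x) (at x within {a..b})"
    if "x \<in> {a..b}" for x
  proof -
    have "(T has_real_derivative (ln b - ln x) / l) (at x)"
      unfolding T_def using that assms l
      by (auto intro!: derivative_eq_intros simp: field_simps)
    then show ?thesis
      by (simp add: has_real_derivative_iff_has_vector_derivative
          has_vector_derivative_at_within log_weight_def l_def)
  qed
  from fundamental_theorem_of_calculus[OF _ this]
  have "(log_weight a b has_integral T b - T a) {a..b}"
    using assms by simp
  moreover have "T b - T a = (b - a) / l - a"
  proof -
    have "a * ln b - a * ln a = a * l"
      by (simp add: l_def algebra_simps)
    then show ?thesis
      using l by (simp add: T_def field_simps)
  qed
  ultimately show ?thesis
    by (simp add: logmean_def l_def)
qed

lemma has_integral_log_interpolation:
  assumes "0 < a" "a < b"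
  shows "((\<lambda>x. log_weight a b x * y\<^sub>a + (1 - log_weight a b x) * y\<^sub>b)
           has_integral (y\<^sub>a * (logmean a b - a) + (b - logmean a b) * y\<^sub>b)) {a..b}"
proof -
  have "((\<lambda>x. log_weight a b x * (y\<^sub>a - y\<^sub>b) + y\<^sub>b)
          has_integral ((logmean a b - a) * (y\<^sub>a - y\<^sub>b) + (b - a) * y\<^sub>b)) {a..b}"
    using assms has_integral_log_weight[OF assms] has_integral_const_real[of y\<^sub>b a b]
    by (intro has_integral_add has_integral_mult_left) auto
  then show ?thesis
    by (simp add: algebra_simps)
qed

lemma Youngs_inequality_scaled:
  fixes p q :: real
  assumes "p > 1" "q > 1" "1/p + 1/q = 1" "x \<ge> 0" "y \<ge> 0" "u > 0" "v > 0"
  shows "x * y \<le> u * v * (x powr p / (p * u powr p) + y powr q / (q * v powr q))"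
proof -
  have "x * y = u * v * ((x / u) * (y / v))"
    using assms by simp
  also have "\<dots> \<le> u * v * ((x / u) powr p / p + (y / v) powr q / q)"
    using assms by (intro mult_left_mono Youngs_inequality) auto
  finally show ?thesis
    using assms by (simp add: powr_divide mult.commute)
qed

lemma integral_mult_le_scaled_Young:
  fixes f g P Q :: "'a::euclidean_space \<Rightarrow> real" and p q :: real
  assumes pq: "p > 1" "q > 1" "1/p + 1/q = 1"
    and fg: "(\<lambda>x. f x * g x) integrable_on S"
    and P: "(P has_integral A) S" and Q: "(Q has_integral B) S"
    and nonneg: "\<And>x. x \<in> S \<Longrightarrow> f x \<ge> 0 \<and> g x \<ge> 0"
    and f_le: "\<And>x. x \<in> S \<Longrightarrow> f x powr p \<le> P x"
    and g_le: "\<And>x. x \<in> S \<Longrightarrow> g x powr q \<le> Q x"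
    and uv: "u > 0" "v > 0"
  shows "integral S (\<lambda>x. f x * g x) \<le> u * v * (A / (p * u powr p) + B / (q * v powr q))"
proof -
  define R where "R x = u * v * (P x / (p * u powr p) + Q x / (q * v powr q))" for x
  have R: "(R has_integral u * v * (A / (p * u powr p) + B / (q * v powr q))) S"
    unfolding R_def by (intro has_integral_mult_right has_integral_add has_integral_divide P Q)
  have "f x * g x \<le> R x" if "x \<in> S" for x
  proof -
    have "f x * g x \<le> u * v * (f x powr p / (p * u powr p) + g x powr q / (q * v powr q))"
      using Youngs_inequality_scaled pq nonneg[OF that] uv by blast
    also have "\<dots> \<le> R x"
      unfolding R_def using pq uv f_le[OF that] g_le[OF that]
      by (intro mult_left_mono add_mono divide_right_mono) auto
    finally show ?thesis .
  qed
  then have "integral S (\<lambda>x. f x * g x) \<le> integral S R"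
    using fg R by (intro integral_le) auto
  then show ?thesis
    using R by (simp add: integral_unique)
qed

lemma nonpos_if_le_all_multiples:
  fixes I c :: real
  assumes "c \<ge> 0" "\<And>u. u > 0 \<Longrightarrow> I \<le> u * c"
  shows "I \<le> 0"
proof (rule ccontr)
  assume "\<not> I \<le> 0"
  then have "I \<le> I / (c + 1) * c"
    using assms(1) by (intro assms(2)) simp
  moreover have "I / (c + 1) * c < I"
    using \<open>\<not> I \<le> 0\<close> assms(1) by (simp add: field_simps)
  ultimately show False
    by simp
qed

lemma Holder_inequality_majorants:
  fixes f g P Q :: "'a::euclidean_space \<Rightarrow> real" and p q :: real
  assumes pq: "p > 1" "q > 1" "1/p + 1/q = 1"
    and fg: "(\<lambda>x. f x * g x) integrable_on S"
    and P: "(P has_integral A) S" and Q: "(Q has_integral B) S"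
    and nonneg: "\<And>x. x \<in> S \<Longrightarrow> f x \<ge> 0 \<and> g x \<ge> 0"
    and f_le: "\<And>x. x \<in> S \<Longrightarrow> f x powr p \<le> P x"
    and g_le: "\<And>x. x \<in> S \<Longrightarrow> g x powr q \<le> Q x"
  shows "integral S (\<lambda>x. f x * g x) \<le> A powr (1/p) * B powr (1/q)"
proof -
  note Young = integral_mult_le_scaled_Young[OF pq fg P Q nonneg f_le g_le]
  have "A \<ge> 0"
    using P by (rule has_integral_nonneg) (metis f_le powr_ge_zero order_trans)
  moreover have "B \<ge> 0"
    using Q by (rule has_integral_nonneg) (metis g_le powr_ge_zero order_trans)
  \<comment> \<open>If A or B vanishes, fix the other scale at 1 and let the free scale tend to 0.\<close>
  ultimately consider "A = 0" | "B = 0" | "A > 0" "B > 0"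
    by linarith
  then show ?thesis
  proof cases
    case 1
    have "integral S (\<lambda>x. f x * g x) \<le> 0"
      using \<open>B \<ge> 0\<close> pq Young[of _ 1] 1 by (intro nonpos_if_le_all_multiples[of "B / q"]) auto
    with 1 show ?thesis
      by simp
  next
    case 2
    have "integral S (\<lambda>x. f x * g x) \<le> 0"
      using \<open>A \<ge> 0\<close> pq Young[of 1] 2 by (intro nonpos_if_le_all_multiples[of "A / p"]) auto
    with 2 show ?thesis
      by simp
  next
    case 3
    have "(A powr (1/p)) powr p = A"
      using 3 pq(1) by (simp add: powr_powr)
    moreover have "(B powr (1/q)) powr q = B"
      using 3 pq(2) by (simp add: powr_powr)
    ultimately show ?thesis
      using Young[of "A powr (1/p)" "B powr (1/q)"] 3 pq by simp
  qed
qed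

theorem corollary3p8:
  fixes f g :: "real \<Rightarrow> real" and a b q :: real
  assumes f_nonneg: "\<forall>x\<ge>0. f x \<ge> 0"
    and g_nonneg: "\<forall>x\<ge>0. g x \<ge> 0"
    and ab: "0 < a" "a < b"
    and integrable: "set_integrable lborel {a..b} (\<lambda>x. f x * g x)"
    and q: "q > 1"
    and f_conv: "GA_convex 1 1 b (\<lambda>x. f x powr q)"
    and g_conv: "GA_convex 1 1 b (\<lambda>x. g x powr (q / (q - 1)))"
  shows "(LINT x:{a..b}|lborel. f x * g x) \<le>
     ((f a powr q) * (logmean a b - a) + (b - logmean a b) * (f b powr q)) powr (1 / q) *
     ((g a powr (q / (q - 1))) * (logmean a b - a) + (b - logmean a b) * (g b powr (q / (q - 1))))
        powr (1 - 1 / q)"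
proof -
  define p where "p = q / (q - 1)"
  have p: "p > 1" "1/q + 1/p = 1" "1/p = 1 - 1/q"
    using q by (simp_all add: p_def field_simps)
  have "integral {a..b} (\<lambda>x. f x * g x) \<le>
     ((f a powr q) * (logmean a b - a) + (b - logmean a b) * (f b powr q)) powr (1 / q) *
     ((g a powr p) * (logmean a b - a) + (b - logmean a b) * (g b powr p)) powr (1 / p)"
  proof (rule Holder_inequality_majorants[OF q p(1,2)])
    show "(\<lambda>x. f x * g x) integrable_on {a..b}"
      using set_borel_integral_eq_integral(1)[OF integrable] .
  qed (use ab f_nonneg g_nonneg has_integral_log_interpolation[OF ab]
           GA_convex_le_log_interpolation[OF f_conv ab]
           GA_convex_le_log_interpolation[OF g_conv ab] in \<open>auto simp: p_def\<close>)
  then show ?thesis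
    using set_borel_integral_eq_integral(2)[OF integrable]
    unfolding p_def[symmetric] p(3)[symmetric] by simp
qed

end
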